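(* Let $f:[0,1]\to\mathbb{R}$ be $1$-Lipschitz and let $\epsilon>0$. Then there exists an even polynomial $p(z)=\sum_{k=0}^{n/2}p_{2k}z^{2k}$ of degree $n=2\lceil4\epsilon^{-3}\rceil$ such that $\sup_{z\in[0,1]}|p(z)-f(z)|\le\epsilon$ and $|p_{2k}|\le 2^n$ for all $k=1,\dots,n/2$. *)

theory Defs
  imports "HOL-Analysis.Analysis" "HOL-Computational_Algebra.Polynomial"
begin

end

theory Submission
  imports Defs
begin

text \<open>
  Extend f evenly to [-1,1] by x \<mapsto> f |x| and take the degree-n Bernstein polynomial of this
  1-Lipschitz function, written in the variable x = 2t - 1. Bounding each sampling error d by
  \<delta>/2 + d^2/(2\<delta>) and using the binomial variance t(1-t)/n gives the uniform error
  \<epsilon>/2 + 1/(2\<epsilon>n) \<le> \<epsilon> as soon as n \<epsilon>^2 \<ge> 1. In the variable x the k-th basis polynomial is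
  (n choose k) 2^-n (1+x)^k (1-x)^(n-k), whose i-th coefficient is at most
  (n choose k) 2^-n (n choose i) in absolute value; summing over k, the approximant's coefficients
  are at most (n choose i) \<le> 2^n when the sampled values are bounded by 1. Its even part is
  the required polynomial.
\<close>

lemma abs_coeff_linear_mult_le:
  fixes s :: real and q :: "real poly"
  assumes "\<bar>s\<bar> \<le> 1" and "\<And>i. \<bar>coeff q i\<bar> \<le> real (m choose i)"
  shows "\<bar>coeff ([:1, s:] * q) i\<bar> \<le> real (Suc m choose i)"
proof (cases i)
  case 0
  then show ?thesis using assms(2)[of 0] by simp
next
  case (Suc j)
  have "\<bar>coeff ([:1, s:] * q) i\<bar> = \<bar>coeff q (Suc j) + s * coeff q j\<bar>"
    using Suc by simp
  also have "\<dots> \<le> \<bar>coeff q (Suc j)\<bar> + \<bar>s\<bar> * \<bar>coeff q j\<bar>"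
    by (metis abs_mult abs_triangle_ineq)
  also have "\<dots> \<le> real (m choose Suc j) + 1 * real (m choose j)"
    using assms by (intro add_mono mult_mono) auto
  finally show ?thesis using Suc by simp
qed

lemma abs_coeff_binomial_powers_le:
  "\<bar>coeff ([:1, 1:] ^ a * [:1, -1:] ^ b :: real poly) i\<bar> \<le> real ((a + b) choose i)"
proof (induction a arbitrary: i)
  case 0
  show ?case
  proof (induction b arbitrary: i)
    case 0
    then show ?case by (cases i) auto
  next
    case (Suc b)
    then show ?case
      using abs_coeff_linear_mult_le[of "-1" "[:1, -1:] ^ b" b i] by simp
  qed
next
  case (Suc a)
  have "\<bar>coeff ([:1, 1:] * ([:1, 1:] ^ a * [:1, -1:] ^ b) :: real poly) i\<bar>
        \<le> real (Suc (a + b) choose i)"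
    by (rule abs_coeff_linear_mult_le) (use Suc in auto)
  then show ?case by (simp only: power_Suc mult.assoc add_Suc)
qed

lemma sum_sq_dev_Bernstein:
  assumes "m > 0"
  shows "(\<Sum>k\<le>m. (t - k / m)\<^sup>2 * Bernstein m k t) = t * (1 - t) / m"
proof -
  \<comment> \<open>reduces the sum to the moments sum_Bernstein, sum_k_Bernstein and sum_kk_Bernstein\<close>
  have moments: "(a - b)\<^sup>2 * x = a * (a - 1) * x + (1 - 2 * b) * a * x + b * b * x"
    for a b x :: real
    by (simp add: algebra_simps power2_eq_square)
  have "(\<Sum>k\<le>m. (k - m * t)\<^sup>2 * Bernstein m k t) = m * t * (1 - t)"
    by (simp add: moments sum.distrib, simp add: mult.assoc flip: sum_distrib_left,
        simp add: algebra_simps power2_eq_square)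
  then have "(\<Sum>k\<le>m. (k - m * t)\<^sup>2 * Bernstein m k t) / m\<^sup>2 = t * (1 - t) / m"
    by (simp add: power2_eq_square)
  then show ?thesis
    using assms by (simp add: sum_divide_distrib field_split_simps power2_commute)
qed

lemma abs_le_half_plus_sq_div:
  fixes d \<delta> :: real
  assumes "\<delta> > 0"
  shows "\<bar>d\<bar> \<le> \<delta> / 2 + d\<^sup>2 / (2 * \<delta>)"
proof -
  have "0 \<le> (\<bar>d\<bar> - \<delta>)\<^sup>2" by simp
  then have "2 * \<delta> * \<bar>d\<bar> \<le> d\<^sup>2 + \<delta>\<^sup>2" by (simp add: power2_eq_square algebra_simps)
  then show ?thesis using assms by (simp add: field_simps power2_eq_square)
qed

lemma Bernstein_approx_lipschitz:
  fixes h :: "real \<Rightarrow> real"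
  assumes lip: "L-lipschitz_on {0..1} h" and t: "t \<in> {0..1}" and "m > 0" and "\<delta> > 0"
  shows "\<bar>(\<Sum>k\<le>m. h (k / m) * Bernstein m k t) - h t\<bar> \<le> \<delta> / 2 + L\<^sup>2 / (8 * \<delta> * m)"
proof -
  have B: "0 \<le> Bernstein m k t" for k
    using t by (simp add: Bernstein_nonneg)
  have pointwise: "\<bar>h (k / m) - h t\<bar> \<le> \<delta> / 2 + L\<^sup>2 / (2 * \<delta>) * (t - k / m)\<^sup>2" if "k \<le> m" for k
  proof -
    have "k / m \<in> {0..1}" using that \<open>m > 0\<close> by simp
    then have "\<bar>h (k / m) - h t\<bar> \<le> \<bar>L * (k / m - t)\<bar>"
      using lipschitz_onD[OF lip _ t] lipschitz_on_nonneg[OF lip]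
      by (simp add: dist_real_def abs_mult)
    also have "\<dots> \<le> \<delta> / 2 + (L * (k / m - t))\<^sup>2 / (2 * \<delta>)"
      by (rule abs_le_half_plus_sq_div[OF \<open>\<delta> > 0\<close>])
    finally show ?thesis by (simp add: power_mult_distrib power2_commute)
  qed
  have "\<bar>(\<Sum>k\<le>m. h (k / m) * Bernstein m k t) - h t\<bar>
        = \<bar>\<Sum>k\<le>m. (h (k / m) - h t) * Bernstein m k t\<bar>"
    by (simp add: left_diff_distrib sum_subtractf flip: sum_distrib_left)
  also have "\<dots> \<le> (\<Sum>k\<le>m. \<bar>h (k / m) - h t\<bar> * Bernstein m k t)"
    using sum_abs by (metis (no_types, lifting) B abs_mult abs_of_nonneg sum.cong)
  also have "\<dots> \<le> (\<Sum>k\<le>m. (\<delta> / 2 + L\<^sup>2 / (2 * \<delta>) * (t - k / m)\<^sup>2) * Bernstein m k t)"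
    using pointwise B by (intro sum_mono mult_right_mono) auto
  also have "\<dots> = \<delta> / 2 * (\<Sum>k\<le>m. Bernstein m k t)
                    + L\<^sup>2 / (2 * \<delta>) * (\<Sum>k\<le>m. (t - k / m)\<^sup>2 * Bernstein m k t)"
    by (simp add: ring_distribs sum.distrib mult.assoc sum_distrib_left)
       (simp flip: sum_divide_distrib sum_distrib_left)
  also have "\<dots> = \<delta> / 2 + L\<^sup>2 / (2 * \<delta>) * (t * (1 - t) / m)"
    by (simp add: sum_sq_dev_Bernstein[OF \<open>m > 0\<close>])
  also have "\<dots> \<le> \<delta> / 2 + L\<^sup>2 / (2 * \<delta>) * (1 / 4 / m)"
  proof -
    have "0 \<le> (t - 1 / 2)\<^sup>2" by simp
    then have "t * (1 - t) \<le> 1 / 4" by (simp add: power2_eq_square algebra_simps)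
    then show ?thesis
      using \<open>\<delta> > 0\<close> \<open>m > 0\<close> by (intro add_left_mono mult_left_mono divide_right_mono) auto
  qed
  also have "\<dots> = \<delta> / 2 + L\<^sup>2 / (8 * \<delta> * m)"
    by simp
  finally show ?thesis .
qed

definition shifted_Bernstein_poly :: "nat \<Rightarrow> nat \<Rightarrow> real poly" where
  "shifted_Bernstein_poly m k =
     smult (real (m choose k) / 2 ^ m) ([:1, 1:] ^ k * [:1, -1:] ^ (m - k))"

lemma poly_shifted_Bernstein_poly:
  assumes "k \<le> m"
  shows "poly (shifted_Bernstein_poly m k) x = Bernstein m k ((1 + x) / 2)"
proof -
  have "(2::real) ^ m = 2 ^ k * 2 ^ (m - k)"
    using assms by (simp flip: power_add)
  moreover have "((1 + x) / 2) ^ k = (1 + x) ^ k / 2 ^ k"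
    and "(1 - (1 + x) / 2) ^ (m - k) = (1 - x) ^ (m - k) / 2 ^ (m - k)"
    by (simp_all add: power_divide field_simps)
  ultimately show ?thesis
    by (simp add: shifted_Bernstein_poly_def Bernstein_def)
qed

lemma degree_shifted_Bernstein_poly_le:
  assumes "k \<le> m"
  shows "degree (shifted_Bernstein_poly m k) \<le> m"
proof -
  have "degree ([:1, 1:] ^ k * [:1, -1:] ^ (m - k) :: real poly) \<le> k * 1 + (m - k) * 1"
    by (intro order.trans[OF degree_mult_le] add_mono order.trans[OF degree_power_le]) auto
  then show ?thesis
    using assms order.trans[OF degree_smult_le] by (simp add: shifted_Bernstein_poly_def)
qed

lemma abs_coeff_shifted_Bernstein_poly_le:
  assumes "k \<le> m"
  shows "\<bar>coeff (shifted_Bernstein_poly m k) i\<bar> \<le> real (m choose k) / 2 ^ m * real (m choose i)"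
  using abs_coeff_binomial_powers_le[of k "m - k" i] assms
  by (simp add: shifted_Bernstein_poly_def abs_mult divide_right_mono mult_left_mono)

definition Bernstein_approx_poly :: "nat \<Rightarrow> (real \<Rightarrow> real) \<Rightarrow> real poly" where
  "Bernstein_approx_poly m g = (\<Sum>k\<le>m. smult (g (2 * real k / real m - 1)) (shifted_Bernstein_poly m k))"

lemma degree_Bernstein_approx_poly_le: "degree (Bernstein_approx_poly m g) \<le> m"
  unfolding Bernstein_approx_poly_def
  by (intro degree_sum_le order.trans[OF degree_smult_le] degree_shifted_Bernstein_poly_le) auto

lemma abs_coeff_Bernstein_approx_poly_le:
  assumes "\<And>k. k \<le> m \<Longrightarrow> \<bar>g (2 * real k / real m - 1)\<bar> \<le> 1"
  shows "\<bar>coeff (Bernstein_approx_poly m g) i\<bar> \<le> real (m choose i)"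
proof -
  have "\<bar>coeff (Bernstein_approx_poly m g) i\<bar>
        \<le> (\<Sum>k\<le>m. \<bar>g (2 * real k / real m - 1)\<bar> * \<bar>coeff (shifted_Bernstein_poly m k) i\<bar>)"
    unfolding Bernstein_approx_poly_def coeff_sum coeff_smult abs_mult[symmetric]
    by (rule sum_abs)
  also have "\<dots> \<le> (\<Sum>k\<le>m. 1 * (real (m choose k) / 2 ^ m * real (m choose i)))"
    using assms abs_coeff_shifted_Bernstein_poly_le by (intro sum_mono mult_mono) auto
  also have "\<dots> = (\<Sum>k\<le>m. real (m choose k)) / 2 ^ m * real (m choose i)"
    by (simp add: sum_distrib_right sum_divide_distrib)
  also have "(\<Sum>k\<le>m. real (m choose k)) = 2 ^ m"
    by (metis choose_row_sum of_nat_numeral of_nat_power of_nat_sum)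
  finally show ?thesis by simp
qed

lemma Bernstein_approx_poly_error:
  fixes g :: "real \<Rightarrow> real"
  assumes lip: "1-lipschitz_on {-1..1} g" and x: "x \<in> {-1..1}" and "m > 0" and "\<delta> > 0"
  shows "\<bar>poly (Bernstein_approx_poly m g) x - g x\<bar> \<le> \<delta> / 2 + 1 / (2 * \<delta> * m)"
proof -
  define h where "h t = g (2 * t - 1)" for t
  have affine: "2-lipschitz_on {0..1} (\<lambda>t::real. 2 * t - 1)"
    by (rule lipschitz_onI) (auto simp: dist_real_def abs_if)
  have "(1 * 2)-lipschitz_on {0..1} h"
    unfolding h_def by (rule lipschitz_on_compose2[OF affine lipschitz_on_subset[OF lip]]) auto
  then have "\<bar>(\<Sum>k\<le>m. h (k / m) * Bernstein m k ((1 + x) / 2)) - h ((1 + x) / 2)\<bar>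
             \<le> \<delta> / 2 + 2\<^sup>2 / (8 * \<delta> * m)"
    using x \<open>m > 0\<close> \<open>\<delta> > 0\<close> by (intro Bernstein_approx_lipschitz) auto
  moreover have "poly (Bernstein_approx_poly m g) x
                 = (\<Sum>k\<le>m. h (k / m) * Bernstein m k ((1 + x) / 2))"
    by (simp add: Bernstein_approx_poly_def poly_sum h_def poly_shifted_Bernstein_poly)
  moreover have "h ((1 + x) / 2) = g x"
    by (simp add: h_def field_simps)
  ultimately show ?thesis
    by (simp add: mult.assoc)
qed

definition even_part :: "'a::field_char_0 poly \<Rightarrow> 'a poly" where
  "even_part p = smult (1 / 2) (p + pcompose p [:0, -1:])"

lemma coeff_even_part: "coeff (even_part p) i = (if even i then coeff p i else 0)"
  by (simp add: even_part_def coeff_pcompose_linear)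

lemma poly_even_part: "poly (even_part p) x = (poly p x + poly p (- x)) / 2"
  by (simp add: even_part_def poly_pcompose)

lemma degree_even_part_le: "degree (even_part p) \<le> degree p"
  by (rule degree_le) (simp add: coeff_even_part coeff_eq_0)

lemma one_le_ceiling_bound_mult_sq:
  fixes \<epsilon> :: real
  assumes "\<epsilon> > 0"
  shows "1 \<le> real (2 * nat \<lceil>4 / \<epsilon> ^ 3\<rceil>) * \<epsilon>\<^sup>2"
proof -
  define N where "N = real (nat \<lceil>4 / \<epsilon> ^ 3\<rceil>)"
  have "N \<ge> 4 / \<epsilon> ^ 3"
    unfolding N_def by (rule real_nat_ceiling_ge)
  then have "N * \<epsilon> ^ 3 \<ge> 4"
    using assms by (simp add: field_simps)
  have "\<lceil>4 / \<epsilon> ^ 3\<rceil> > 0"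
    using assms by simp
  then have "N \<ge> 1"
    unfolding N_def by linarith
  show ?thesis
  proof (cases "\<epsilon> \<le> 1")
    case True
    then have "N * \<epsilon> ^ 3 \<le> N * \<epsilon>\<^sup>2"
      using \<open>N \<ge> 1\<close> assms by (intro mult_left_mono) (auto simp: power2_eq_square power3_eq_cube)
    then show ?thesis
      using \<open>N * \<epsilon> ^ 3 \<ge> 4\<close> by (simp add: N_def)
  next
    case False
    then have "1 \<le> \<epsilon>\<^sup>2"
      by (simp add: one_le_power)
    then show ?thesis
      using \<open>N \<ge> 1\<close> mult_mono[of 1 N 1 "\<epsilon>\<^sup>2"] by (simp add: N_def)
  qed
qed

lemma lipschitz_on_even_extension:
  fixes f :: "real \<Rightarrow> real"
  assumes "C-lipschitz_on {0..1} f"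
  shows "C-lipschitz_on {-1..1} (\<lambda>x. f \<bar>x\<bar> - c)"
proof (rule lipschitz_onI)
  fix x y :: real
  assume "x \<in> {-1..1}" "y \<in> {-1..1}"
  then have "dist (f \<bar>x\<bar>) (f \<bar>y\<bar>) \<le> C * dist \<bar>x\<bar> \<bar>y\<bar>"
    by (intro lipschitz_onD[OF assms]) auto
  also have "\<dots> \<le> C * dist x y"
    using lipschitz_on_nonneg[OF assms] by (intro mult_left_mono) (auto simp: dist_real_def)
  finally show "dist (f \<bar>x\<bar> - c) (f \<bar>y\<bar> - c) \<le> C * dist x y"
    by (simp add: dist_real_def)
qed (rule lipschitz_on_nonneg[OF assms])

text \<open>Subtracting f 0 makes all sampled values bounded by 1, which the coefficient bound needs.\<close>

lemma Bernstein_approx_even_extension: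
  fixes f :: "real \<Rightarrow> real"
  assumes "1-lipschitz_on {0..1} f" and "\<epsilon> > 0" and "n > 0" and "1 \<le> real n * \<epsilon>\<^sup>2"
  shows "\<exists>Q. degree Q \<le> n \<and> (\<forall>i \<ge> 1. \<bar>coeff Q i\<bar> \<le> real (n choose i))
              \<and> (\<forall>y \<in> {-1..1}. \<bar>poly Q y - f \<bar>y\<bar>\<bar> \<le> \<epsilon>)"
proof (intro exI conjI allI impI ballI)
  define g where "g x = f \<bar>x\<bar> - f 0" for x
  have lip: "1-lipschitz_on {-1..1} g"
    unfolding g_def by (rule lipschitz_on_even_extension[OF assms(1)])
  define Q where "Q = Bernstein_approx_poly n g + [:f 0:]"
  show "degree Q \<le> n"
    unfolding Q_def by (intro degree_add_le degree_Bernstein_approx_poly_le) simp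
  have "\<bar>g y\<bar> \<le> 1" if "y \<in> {-1..1}" for y
    using lipschitz_onD[OF lip that, of 0] that by (simp add: g_def dist_real_def) arith
  moreover have "2 * real k / real n - 1 \<in> {-1..1}" if "k \<le> n" for k
    using that \<open>n > 0\<close> by (simp add: field_simps)
  ultimately have "\<bar>coeff (Bernstein_approx_poly n g) i\<bar> \<le> real (n choose i)" for i
    by (intro abs_coeff_Bernstein_approx_poly_le) blast
  then show "\<bar>coeff Q i\<bar> \<le> real (n choose i)" if "i \<ge> 1" for i
    using that by (auto simp: Q_def coeff_pCons split: nat.split)
  show "\<bar>poly Q y - f \<bar>y\<bar>\<bar> \<le> \<epsilon>" if "y \<in> {-1..1}" for y
  proof -
    have "1 / (2 * \<epsilon> * n) \<le> \<epsilon> / 2"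
      using assms(2-4) by (simp add: field_simps power2_eq_square)
    then show ?thesis
      using Bernstein_approx_poly_error[OF lip that \<open>n > 0\<close> \<open>\<epsilon> > 0\<close>]
      by (simp add: Q_def g_def)
  qed
qed

theorem lemma4:
  fixes f :: "real \<Rightarrow> real" and \<epsilon> :: real
  assumes "1-lipschitz_on {0..1} f"
    and "\<epsilon> > 0"
  shows "\<exists>p :: real poly.
           (let n = 2 * nat \<lceil>4 / \<epsilon> ^ 3\<rceil> in
              degree p \<le> n
            \<and> (\<forall>k. odd k \<longrightarrow> coeff p k = 0)
            \<and> (\<forall>z\<in>{0..1}. \<bar>poly p z - f z\<bar> \<le> \<epsilon>)
            \<and> (\<forall>k\<in>{1..n div 2}. \<bar>coeff p (2 * k)\<bar> \<le> 2 ^ n))"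
proof -
  define n where "n = 2 * nat \<lceil>4 / \<epsilon> ^ 3\<rceil>"
  have n_sq: "1 \<le> real n * \<epsilon>\<^sup>2"
    unfolding n_def by (rule one_le_ceiling_bound_mult_sq[OF \<open>\<epsilon> > 0\<close>])
  then have "n > 0"
    by (cases n) auto
  then obtain Q where deg: "degree Q \<le> n" and coeff: "\<And>i. i \<ge> 1 \<Longrightarrow> \<bar>coeff Q i\<bar> \<le> real (n choose i)"
    and approx: "\<And>y. y \<in> {-1..1} \<Longrightarrow> \<bar>poly Q y - f \<bar>y\<bar>\<bar> \<le> \<epsilon>"
    using Bernstein_approx_even_extension[OF assms \<open>n > 0\<close> n_sq] by blast
  show ?thesis
    unfolding Let_def n_def[symmetric]
  proof (intro exI[of _ "even_part Q"] conjI ballI allI impI)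
    show "degree (even_part Q) \<le> n"
      using deg degree_even_part_le order.trans by blast
    show "coeff (even_part Q) k = 0" if "odd k" for k
      using that by (simp add: coeff_even_part)
    show "\<bar>poly (even_part Q) z - f z\<bar> \<le> \<epsilon>" if "z \<in> {0..1}" for z
      using approx[of z] approx[of "- z"] that by (simp add: poly_even_part field_simps abs_le_iff)
    show "\<bar>coeff (even_part Q) (2 * k)\<bar> \<le> 2 ^ n" if "k \<in> {1..n div 2}" for k
    proof -
      have "\<bar>coeff (even_part Q) (2 * k)\<bar> \<le> real (n choose (2 * k))"
        using that coeff[of "2 * k"] by (simp add: coeff_even_part)
      also have "\<dots> \<le> 2 ^ n"
        by (metis binomial_le_pow2 of_nat_le_iff of_nat_numeral of_nat_power)
      finally show ?thesis .
    qed
  qed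
qed

end
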